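(* There are constants $C_5$ and $\Delta_1$ (depending only on $r$) such that for every subset $U\subset V_n$ with $|U|=m$ and every $\alpha\in(0,1)$, $$\mathbb P\big(e(U,U^c)\le\alpha r|U|\big)\le C_5\exp\left(-\frac r2(1-\alpha)\,m\log(n/m)+\Delta_1 m\right).$$
   Context: Fix an integer $r\ge3$, let $V_n=\{1,\dots,n\}$ with $rn$ even, and let $\mathbb P$ be the law of the random multigraph $G_n$ on $V_n$ obtained by giving each vertex $r$ half-edges and pairing all $rn$ half-edges uniformly at random. For $U\subset V_n$, $e(U,U^c)$ is the number of edges of $G_n$ (pairs of matched half-edges) with one endpoint in $U$ and the other in $U^c=V_n\setminus U$. *)

theory Defs
  imports Complex_Main
begin

text \<open>Configuration model: vertex v in {1..n} carries half-edges (v,i), i < r.\<close>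
definition half_edges :: "nat \<Rightarrow> nat \<Rightarrow> (nat \<times> nat) set" where
  "half_edges r n = {1..n} \<times> {..<r}"

definition perfect_matchings :: "'a set \<Rightarrow> 'a set set set" where
  "perfect_matchings H =
     {M. (\<forall>e\<in>M. e \<subseteq> H \<and> card e = 2) \<and> (\<forall>h\<in>H. \<exists>!e. e \<in> M \<and> h \<in> e)}"

definition cut_edges :: "nat set \<Rightarrow> (nat \<times> nat) set set \<Rightarrow> nat" where
  "cut_edges U M = card {e \<in> M. \<exists>h\<in>e. \<exists>h'\<in>e. fst h \<in> U \<and> fst h' \<notin> U}"

definition config_prob :: "nat \<Rightarrow> nat \<Rightarrow> ((nat \<times> nat) set set \<Rightarrow> bool) \<Rightarrow> real" where
  "config_prob r n P =
     real (card {M \<in> perfect_matchings (half_edges r n). P M})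
     / real (card (perfect_matchings (half_edges r n)))"

end

theory Submission
  imports Defs
begin

text \<open>
  Union bound over the half-edges at \<open>U\<close> that are paired inside \<open>U\<close>. If
  \<open>e(U,U\<^sup>c) \<le> \<alpha> r m\<close>, each crossing edge uses only one of the \<open>r m\<close> half-edges at \<open>U\<close>,
  so the pairing is closed on a set \<open>S\<close> of such half-edges with \<open>|S| \<ge> (1 - \<alpha>) r m\<close>.
  For \<open>|S| = 2j\<close> among \<open>2N = r n\<close> half-edges, the fraction of pairings closed on \<open>S\<close> is
  \<open>(2j-1)!! (2N-2j-1)!! / (2N-1)!! \<le> (j/N)^j \<le> (m/n)^((1-\<alpha>) r m / 2)\<close>, and there are at
  most \<open>2^(r m)\<close> candidate sets \<open>S\<close>. Hence \<open>C\<^sub>5 = 1\<close> and \<open>\<Delta>\<^sub>1 = r log 2\<close> work, for every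
  real \<open>\<alpha>\<close>.
\<close>

fun num_pairings :: "nat \<Rightarrow> nat" where
  "num_pairings 0 = 1"
| "num_pairings (Suc 0) = 0"
| "num_pairings (Suc (Suc k)) = Suc k * num_pairings k"

lemma num_pairings_odd: "odd k \<Longrightarrow> num_pairings k = 0"
  by (induction k rule: num_pairings.induct) auto

lemma num_pairings_even_pos: "even k \<Longrightarrow> num_pairings k > 0"
  by (induction k rule: num_pairings.induct) auto

lemma num_pairings_split_le:
  "j \<le> N \<Longrightarrow> real (num_pairings (2*j)) * real (num_pairings (2*(N-j)))
     \<le> (real j / real N) ^ j * real (num_pairings (2*N))"
proof (induction j arbitrary: N)
  case 0
  then show ?case by simp
next
  case (Suc j)
  then obtain N' where N: "N = Suc N'" "j \<le> N'" by (cases N) auto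
  have step: "2 * real j + 1 \<le> real (Suc j) / real N * (2 * real N' + 1)"
    using N by (simp add: field_simps)
  have "real j / real N' \<le> real (Suc j) / real N"
    using N by (cases "N' = 0") (auto simp: field_simps)
  then have mono: "(real j / real N') ^ j \<le> (real (Suc j) / real N) ^ j"
    by (rule power_mono) simp
  have "real (num_pairings (2*Suc j)) * real (num_pairings (2*(N-Suc j)))
      = (2 * real j + 1) * (real (num_pairings (2*j)) * real (num_pairings (2*(N'-j))))"
    using N by (simp add: numeral_2_eq_2 algebra_simps)
  also have "\<dots> \<le> (2 * real j + 1) * ((real j / real N') ^ j * real (num_pairings (2*N')))"
    using Suc.IH N by (intro mult_left_mono) auto
  also have "\<dots> \<le> (real (Suc j) / real N * (2 * real N' + 1))
                  * ((real (Suc j) / real N) ^ j * real (num_pairings (2*N')))"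
    using step mono by (intro mult_mono) auto
  also have "\<dots> = (real (Suc j) / real N) ^ Suc j * real (num_pairings (2*N))"
    using N by (simp add: numeral_2_eq_2 algebra_simps)
  finally show ?case .
qed

lemma perfect_matching_edge: "M \<in> perfect_matchings H \<Longrightarrow> e \<in> M \<Longrightarrow> e \<subseteq> H \<and> card e = 2"
  unfolding perfect_matchings_def by auto

lemma perfect_matching_covers: "M \<in> perfect_matchings H \<Longrightarrow> h \<in> H \<Longrightarrow> \<exists>e\<in>M. h \<in> e"
  unfolding perfect_matchings_def by blast

lemma perfect_matching_edge_unique:
  "M \<in> perfect_matchings H \<Longrightarrow> e \<in> M \<Longrightarrow> e' \<in> M \<Longrightarrow> h \<in> e \<Longrightarrow> h \<in> e' \<Longrightarrow> e = e'"
  unfolding perfect_matchings_def by blast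

lemma finite_perfect_matchings: "finite H \<Longrightarrow> finite (perfect_matchings H)"
  by (rule finite_subset[of _ "Pow (Pow H)"]) (auto simp: perfect_matchings_def)

lemma perfect_matchings_empty: "perfect_matchings {} = {{}}"
  unfolding perfect_matchings_def by auto

lemma perfect_matching_remove_edge:
  assumes M: "M \<in> perfect_matchings H" and e: "e \<in> M"
  shows "M - {e} \<in> perfect_matchings (H - e)"
  unfolding perfect_matchings_def
proof (intro CollectI conjI ballI)
  fix e' assume e': "e' \<in> M - {e}"
  then have "e' \<inter> e = {}" using perfect_matching_edge_unique[OF M e] by blast
  then show "e' \<subseteq> H - e" "card e' = 2" using perfect_matching_edge[OF M] e' by auto
next
  fix h assume "h \<in> H - e"
  then show "\<exists>!e'. e' \<in> M - {e} \<and> h \<in> e'"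
    using perfect_matching_covers[OF M] perfect_matching_edge_unique[OF M] by blast
qed

lemma perfect_matching_insert_edge:
  assumes M: "M \<in> perfect_matchings (H - e)" and e: "e \<subseteq> H" "card e = 2"
  shows "insert e M \<in> perfect_matchings H"
  unfolding perfect_matchings_def
proof (intro CollectI conjI ballI)
  fix e' assume "e' \<in> insert e M"
  then show "e' \<subseteq> H" "card e' = 2" using perfect_matching_edge[OF M] e by auto
next
  fix h assume h: "h \<in> H"
  have disj: "e' \<inter> e = {}" if "e' \<in> M" for e'
    using perfect_matching_edge[OF M that] by auto
  show "\<exists>!e'. e' \<in> insert e M \<and> h \<in> e'"
  proof (cases "h \<in> e")
    case True
    then show ?thesis using disj by blast
  next
    case False
    then obtain e' where "e' \<in> M" "h \<in> e'" using perfect_matching_covers[OF M] h by blast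
    then show ?thesis using False perfect_matching_edge_unique[OF M] by blast
  qed
qed

lemma perfect_matchings_decompose:
  assumes "h \<in> H"
  shows "perfect_matchings H = (\<Union>x\<in>H-{h}. insert {h,x} ` perfect_matchings (H-{h,x}))"
proof (intro equalityI subsetI)
  fix M assume M: "M \<in> perfect_matchings H"
  obtain e where e: "e \<in> M" "h \<in> e" using perfect_matching_covers[OF M assms] by blast
  with perfect_matching_edge[OF M e(1)] obtain x where "e = {h,x}" "x \<in> H - {h}"
    by (auto simp: card_2_iff)
  with perfect_matching_remove_edge[OF M e(1)] e(1)
  show "M \<in> (\<Union>x\<in>H-{h}. insert {h,x} ` perfect_matchings (H-{h,x}))"
    by (auto intro!: image_eqI[of _ _ "M - {e}"])
next
  fix M assume "M \<in> (\<Union>x\<in>H-{h}. insert {h,x} ` perfect_matchings (H-{h,x}))"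
  with assms show "M \<in> perfect_matchings H"
    by (auto intro: perfect_matching_insert_edge)
qed

lemma card_perfect_matchings:
  "finite H \<Longrightarrow> card (perfect_matchings H) = num_pairings (card H)"
proof (induction "card H" arbitrary: H rule: less_induct)
  case less
  show ?case
  proof (cases "H = {}")
    case True
    then show ?thesis by (simp add: perfect_matchings_empty)
  next
    case False
    then obtain h where h: "h \<in> H" by blast
    then obtain k where k: "card H = Suc k" using less.prems by (metis card_Suc_Diff1)
    have card_rest: "card (H - {h,x}) = k - 1" if "x \<in> H - {h}" for x
    proof -
      have "card {h,x} = 2" using that by auto
      then show ?thesis using that h less.prems k by (simp add: card_Diff_subset)
    qed
    have inj: "inj_on (insert {h,x}) (perfect_matchings (H - {h,x}))" for x
    proof (rule inj_onI)
      fix M M' assume "M \<in> perfect_matchings (H - {h,x})" "M' \<in> perfect_matchings (H - {h,x})"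
      then have "{h,x} \<notin> M" "{h,x} \<notin> M'" by (auto dest: perfect_matching_edge)
      then show "insert {h,x} M = insert {h,x} M' \<Longrightarrow> M = M'" by (simp add: insert_ident)
    qed
    have "card (perfect_matchings H)
        = (\<Sum>x\<in>H-{h}. card (insert {h,x} ` perfect_matchings (H-{h,x})))"
      unfolding perfect_matchings_decompose[OF h]
    proof (rule card_UN_disjoint)
      show "\<forall>x\<in>H-{h}. \<forall>y\<in>H-{h}. x \<noteq> y \<longrightarrow>
          insert {h,x} ` perfect_matchings (H-{h,x}) \<inter> insert {h,y} ` perfect_matchings (H-{h,y}) = {}"
      proof (intro ballI impI equalityI subsetI)
        fix x y M assume xy: "x \<in> H - {h}" "y \<in> H - {h}" "x \<noteq> y"
          and "M \<in> insert {h,x} ` perfect_matchings (H-{h,x}) \<inter> insert {h,y} ` perfect_matchings (H-{h,y})"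
        then obtain My where My: "My \<in> perfect_matchings (H-{h,y})" "{h,x} \<in> insert {h,y} My"
          by blast
        have "{h,x} \<notin> My" using perfect_matching_edge[OF My(1)] by blast
        with My(2) xy show "M \<in> {}" by (auto simp: doubleton_eq_iff)
      qed simp
    qed (use less.prems in \<open>auto intro: finite_perfect_matchings\<close>)
    also have "\<dots> = (\<Sum>x\<in>H-{h}. num_pairings (k - 1))"
    proof (rule sum.cong[OF refl])
      fix x assume x: "x \<in> H - {h}"
      then have "card (H - {h,x}) < card H" using less.prems h by (intro psubset_card_mono) auto
      then show "card (insert {h,x} ` perfect_matchings (H-{h,x})) = num_pairings (k - 1)"
        using less.hyps less.prems card_rest[OF x] by (simp add: card_image[OF inj])
    qed
    also have "\<dots> = num_pairings (card H)"
      using h less.prems k by (cases k) auto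
    finally show ?thesis .
  qed
qed

definition closed_matchings :: "'a set \<Rightarrow> 'a set \<Rightarrow> 'a set set set" where
  "closed_matchings H S = {M \<in> perfect_matchings H. \<forall>e\<in>M. e \<inter> S \<noteq> {} \<longrightarrow> e \<subseteq> S}"

definition crossing_edges :: "'a set set \<Rightarrow> 'a set \<Rightarrow> 'a set set" where
  "crossing_edges M W = {e \<in> M. e \<inter> W \<noteq> {} \<and> \<not> e \<subseteq> W}"

lemma closed_matching_split:
  assumes M: "M \<in> closed_matchings H S" and S: "S \<subseteq> H"
  shows "{e \<in> M. e \<subseteq> S} \<in> perfect_matchings S"
    and "{e \<in> M. \<not> e \<subseteq> S} \<in> perfect_matchings (H - S)"
proof -
  have pm: "M \<in> perfect_matchings H" and closed: "\<And>e. e \<in> M \<Longrightarrow> e \<inter> S \<noteq> {} \<Longrightarrow> e \<subseteq> S"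
    using M by (auto simp: closed_matchings_def)
  note edge = perfect_matching_edge[OF pm] and unique = perfect_matching_edge_unique[OF pm]
    and covers = perfect_matching_covers[OF pm]
  show "{e \<in> M. e \<subseteq> S} \<in> perfect_matchings S"
    unfolding perfect_matchings_def
  proof (intro CollectI conjI ballI)
    fix h assume "h \<in> S"
    then show "\<exists>!e. e \<in> {e \<in> M. e \<subseteq> S} \<and> h \<in> e"
      using S covers[of h] closed unique by blast
  qed (use edge in auto)
  show "{e \<in> M. \<not> e \<subseteq> S} \<in> perfect_matchings (H - S)"
    unfolding perfect_matchings_def
  proof (intro CollectI conjI ballI)
    fix e assume "e \<in> {e \<in> M. \<not> e \<subseteq> S}"
    then show "e \<subseteq> H - S" "card e = 2" using edge closed by auto
  next
    fix h assume "h \<in> H - S"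
    then show "\<exists>!e. e \<in> {e \<in> M. \<not> e \<subseteq> S} \<and> h \<in> e"
      using covers[of h] unique by blast
  qed
qed

lemma card_closed_matchings_le:
  assumes "finite H" "S \<subseteq> H"
  shows "card (closed_matchings H S) \<le> num_pairings (card S) * num_pairings (card H - card S)"
proof -
  let ?split = "\<lambda>M. ({e \<in> M. e \<subseteq> S}, {e \<in> M. \<not> e \<subseteq> S})"
  have "inj_on ?split (closed_matchings H S)"
  proof (rule inj_onI)
    fix M M' assume "?split M = ?split M'"
    then have "{e \<in> M. e \<subseteq> S} \<union> {e \<in> M. \<not> e \<subseteq> S} = {e \<in> M'. e \<subseteq> S} \<union> {e \<in> M'. \<not> e \<subseteq> S}"
      by simp
    then show "M = M'" by blast
  qed
  moreover have "?split ` closed_matchings H S \<subseteq> perfect_matchings S \<times> perfect_matchings (H - S)"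
    using closed_matching_split[OF _ assms(2)] by auto
  moreover have "finite (perfect_matchings S \<times> perfect_matchings (H - S))"
    using assms by (auto intro: finite_perfect_matchings finite_subset)
  ultimately have "card (closed_matchings H S) \<le> card (perfect_matchings S \<times> perfect_matchings (H - S))"
    by (rule card_inj_on_le)
  also have "\<dots> = num_pairings (card S) * num_pairings (card H - card S)"
    using assms by (simp add: card_cartesian_product card_perfect_matchings card_Diff_subset finite_subset)
  finally show ?thesis .
qed

lemma closed_matching_even_card:
  assumes "M \<in> closed_matchings H S" "finite H" "S \<subseteq> H"
  shows "even (card S)"
proof (rule ccontr)
  assume "odd (card S)"
  then have "card (perfect_matchings S) = 0"
    using assms(2,3) by (simp add: card_perfect_matchings finite_subset num_pairings_odd)
  moreover have "finite (perfect_matchings S)"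
    using assms(2,3) by (simp add: finite_perfect_matchings finite_subset)
  ultimately show False using closed_matching_split(1)[OF assms(1,3)] by simp
qed

lemma card_closed_matchings_le_power:
  assumes "finite H" "S \<subseteq> H" "even (card H)" "even (card S)"
  shows "real (card (closed_matchings H S))
           \<le> (real (card S) / real (card H)) ^ (card S div 2) * real (num_pairings (card H))"
proof -
  obtain j N where j: "card S = 2 * j" and N: "card H = 2 * N" using assms(3,4) by blast
  have "card S \<le> card H" using assms(1,2) by (rule card_mono)
  then have jN: "j \<le> N" using j N by simp
  have "card (closed_matchings H S) \<le> num_pairings (2*j) * num_pairings (2*(N-j))"
    using card_closed_matchings_le[OF assms(1,2)] j N by (simp add: diff_mult_distrib2)
  then have "real (card (closed_matchings H S)) \<le> real (num_pairings (2*j) * num_pairings (2*(N-j)))"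
    by (simp only: of_nat_le_iff)
  also have "\<dots> \<le> (real j / real N) ^ j * real (num_pairings (2*N))"
    using num_pairings_split_le[OF jN] by simp
  finally show ?thesis using j N by simp
qed

lemma closed_matchings_internal:
  assumes "M \<in> perfect_matchings H"
  shows "M \<in> closed_matchings H (\<Union>{e \<in> M. e \<subseteq> W})"
  unfolding closed_matchings_def
proof (intro CollectI conjI assms ballI impI subsetI)
  fix e h assume e: "e \<in> M" and "e \<inter> \<Union>{e \<in> M. e \<subseteq> W} \<noteq> {}" and "h \<in> e"
  then obtain e' where "e' \<in> M" "e' \<subseteq> W" "e \<inter> e' \<noteq> {}" by blast
  then have "e = e'" using perfect_matching_edge_unique[OF assms e] by blast
  then show "h \<in> \<Union>{e \<in> M. e \<subseteq> W}" using \<open>e' \<subseteq> W\<close> e \<open>h \<in> e\<close> by blast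
qed

lemma card_le_internal_plus_crossing:
  assumes M: "M \<in> perfect_matchings H" and "finite H" "W \<subseteq> H"
  shows "card W \<le> card (\<Union>{e \<in> M. e \<subseteq> W}) + card (crossing_edges M W)"
proof -
  let ?I = "\<Union>{e \<in> M. e \<subseteq> W}" and ?C = "crossing_edges M W"
  have "M \<subseteq> Pow H" using perfect_matching_edge[OF M] by auto
  then have "finite M" "\<forall>e\<in>M. finite e"
    using \<open>finite H\<close> finite_subset by (blast, blast)
  then have fin: "finite ?I" "finite ?C" "finite (\<Union>e\<in>?C. e \<inter> W)"
    using \<open>W \<subseteq> H\<close> \<open>finite H\<close> unfolding crossing_edges_def by (auto intro: finite_subset)
  have "W \<subseteq> ?I \<union> (\<Union>e\<in>?C. e \<inter> W)"
  proof
    fix h assume "h \<in> W"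
    then obtain e where "e \<in> M" "h \<in> e" using perfect_matching_covers[OF M] \<open>W \<subseteq> H\<close> by blast
    then show "h \<in> ?I \<union> (\<Union>e\<in>?C. e \<inter> W)"
      using \<open>h \<in> W\<close> unfolding crossing_edges_def by blast
  qed
  then have "card W \<le> card ?I + card (\<Union>e\<in>?C. e \<inter> W)"
    using fin by (meson card_Un_le card_mono finite_UnI le_trans)
  also have "card (\<Union>e\<in>?C. e \<inter> W) \<le> (\<Sum>e\<in>?C. card (e \<inter> W))"
    by (rule card_UN_le[OF fin(2)])
  also have "\<dots> \<le> (\<Sum>e\<in>?C. 1)"
  proof (rule sum_mono)
    fix e assume e: "e \<in> ?C"
    then have "e \<inter> W \<subset> e" "card e = 2" "finite e"
      using perfect_matching_edge[OF M] \<open>\<forall>e\<in>M. finite e\<close> unfolding crossing_edges_def by auto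
    then have "card (e \<inter> W) < 2" using psubset_card_mono by metis
    then show "card (e \<inter> W) \<le> 1" by simp
  qed
  finally show ?thesis by simp
qed

lemma card_few_crossing_matchings_le:
  assumes H: "finite H" "even (card H)" and W: "W \<subseteq> H" "W \<noteq> {}"
  shows "real (card {M \<in> perfect_matchings H. real (card (crossing_edges M W)) \<le> c})
           \<le> 2 ^ card W * (real (card W) / real (card H)) powr ((real (card W) - c) / 2)
               * real (num_pairings (card H))"
proof -
  let ?E = "{M \<in> perfect_matchings H. real (card (crossing_edges M W)) \<le> c}"
  define SS where "SS = {S \<in> Pow W. even (card S) \<and> real (card W) - c \<le> real (card S)}"
  define B where "B = (real (card W) / real (card H)) powr ((real (card W) - c) / 2)"
  have finW: "finite W" using H(1) W(1) finite_subset by blast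
  have WH: "card W \<le> card H" using H(1) W(1) by (rule card_mono)
  have "card W > 0" using W(2) finW by (simp add: card_gt_0_iff)
  then have ratio: "0 < real (card W) / real (card H)" "real (card W) / real (card H) \<le> 1"
    using WH by (simp_all add: divide_simps)
  have cover: "?E \<subseteq> (\<Union>S\<in>SS. closed_matchings H S)"
  proof
    fix M assume "M \<in> ?E"
    then have M: "M \<in> perfect_matchings H" and few: "real (card (crossing_edges M W)) \<le> c" by auto
    let ?S = "\<Union>{e \<in> M. e \<subseteq> W}"
    have closed: "M \<in> closed_matchings H ?S" using M by (rule closed_matchings_internal)
    have "?S \<subseteq> W" by blast
    moreover have "even (card ?S)"
      using closed_matching_even_card[OF closed H(1)] \<open>?S \<subseteq> W\<close> W(1) by blast
    moreover have "real (card W) - c \<le> real (card ?S)"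
      using card_le_internal_plus_crossing[OF M H(1) W(1)] few by linarith
    ultimately show "M \<in> (\<Union>S\<in>SS. closed_matchings H S)"
      using closed unfolding SS_def by blast
  qed
  have each: "real (card (closed_matchings H S)) \<le> B * real (num_pairings (card H))"
    if "S \<in> SS" for S
  proof -
    have S: "S \<subseteq> W" "even (card S)" "real (card W) - c \<le> real (card S)"
      using that unfolding SS_def by auto
    have "card S \<le> card W" using finW S(1) by (rule card_mono)
    then have "(real (card S) / real (card H)) ^ (card S div 2)
               \<le> (real (card W) / real (card H)) ^ (card S div 2)"
      by (intro power_mono divide_right_mono) auto
    also have "\<dots> = (real (card W) / real (card H)) powr (real (card S) / 2)"
      using ratio(1) S(2) by (simp add: powr_realpow[symmetric] real_of_nat_div)
    also have "\<dots> \<le> B"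
      unfolding B_def using S(3) ratio by (intro powr_mono') auto
    finally have base: "(real (card S) / real (card H)) ^ (card S div 2) \<le> B" .
    have "real (card (closed_matchings H S))
          \<le> (real (card S) / real (card H)) ^ (card S div 2) * real (num_pairings (card H))"
      using S(1) W(1) by (intro card_closed_matchings_le_power H S(2)) auto
    also have "\<dots> \<le> B * real (num_pairings (card H))"
      using base by (rule mult_right_mono) simp
    finally show ?thesis .
  qed
  have finSS: "finite SS" unfolding SS_def using finW by simp
  have "card ?E \<le> card (\<Union>S\<in>SS. closed_matchings H S)"
    using cover finSS H(1)
    by (intro card_mono) (auto simp: closed_matchings_def finite_perfect_matchings)
  also have "\<dots> \<le> (\<Sum>S\<in>SS. card (closed_matchings H S))" by (rule card_UN_le[OF finSS])
  finally have "real (card ?E) \<le> (\<Sum>S\<in>SS. real (card (closed_matchings H S)))"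
    unfolding of_nat_sum[symmetric] of_nat_le_iff .
  also have "\<dots> \<le> real (card SS) * (B * real (num_pairings (card H)))"
    using sum_mono[OF each] by simp
  also have "\<dots> \<le> 2 ^ card W * (B * real (num_pairings (card H)))"
  proof (rule mult_right_mono)
    have "card SS \<le> card (Pow W)" unfolding SS_def using finW by (intro card_mono) auto
    then show "real (card SS) \<le> 2 ^ card W" using finW by (simp add: card_Pow)
  qed (simp add: B_def)
  finally show ?thesis unfolding B_def by (simp add: mult.assoc)
qed

lemma cut_edges_eq_card_crossing_edges:
  assumes "M \<in> perfect_matchings (half_edges r n)"
  shows "cut_edges U M = card (crossing_edges M (U \<times> {..<r}))"
proof -
  have "e \<subseteq> UNIV \<times> {..<r}" if "e \<in> M" for e
    using perfect_matching_edge[OF assms that] by (auto simp: half_edges_def)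
  then have "{e \<in> M. \<exists>h\<in>e. \<exists>h'\<in>e. fst h \<in> U \<and> fst h' \<notin> U} = crossing_edges M (U \<times> {..<r})"
    unfolding crossing_edges_def by fastforce
  then show ?thesis unfolding cut_edges_def by simp
qed

lemma config_prob_few_cut_edges_le:
  assumes "r > 0" "even (r * n)" "U \<subseteq> {1..n}" "U \<noteq> {}"
  shows "config_prob r n (\<lambda>M. real (cut_edges U M) \<le> c)
           \<le> 2 ^ (card U * r) * (real (card U) / real n) powr ((real (card U * r) - c) / 2)"
proof -
  let ?H = "half_edges r n" and ?W = "U \<times> {..<r}"
  have cards: "card ?H = n * r" "card ?W = card U * r"
    by (simp_all add: half_edges_def card_cartesian_product)
  have H: "finite ?H" "even (card ?H)" using assms(2) by (simp_all add: half_edges_def mult.commute)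
  have W: "?W \<subseteq> ?H" "?W \<noteq> {}" using assms by (auto simp: half_edges_def lessThan_empty_iff)
  have "config_prob r n (\<lambda>M. real (cut_edges U M) \<le> c)
      = real (card {M \<in> perfect_matchings ?H. real (card (crossing_edges M ?W)) \<le> c})
        / real (num_pairings (card ?H))"
    unfolding config_prob_def card_perfect_matchings[OF H(1)]
    by (simp add: cut_edges_eq_card_crossing_edges cong: conj_cong)
  also have "\<dots> \<le> 2 ^ (card U * r) * (real (card U) / real n) powr ((real (card U * r) - c) / 2)"
    using card_few_crossing_matchings_le[OF H W, of c] num_pairings_even_pos[OF H(2)] assms(1)
    by (simp add: cards divide_le_eq)
  finally show ?thesis .
qed

theorem lemma2:
  fixes r :: nat
  assumes "r \<ge> 3"
  shows "\<exists>C5 \<Delta>1 :: real. \<forall>n U (\<alpha>::real).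
           even (r * n) \<longrightarrow> U \<subseteq> {1..n} \<longrightarrow> card U \<ge> 1 \<longrightarrow> 0 < \<alpha> \<longrightarrow> \<alpha> < 1 \<longrightarrow>
           config_prob r n (\<lambda>M. real (cut_edges U M) \<le> \<alpha> * real r * real (card U))
             \<le> C5 * exp (- (real r / 2) * (1 - \<alpha>) * real (card U) * ln (real n / real (card U))
                        + \<Delta>1 * real (card U))"
proof (rule exI[of _ 1], rule exI[of _ "real r * ln 2"], intro allI impI)
  fix n U and \<alpha> :: real
  assume "even (r * n)" and U: "U \<subseteq> {1..n}" "card U \<ge> 1" and "0 < \<alpha>" "\<alpha> < 1"
  let ?m = "card U"
  have "?m \<le> n" using card_mono[OF _ U(1)] by simp
  have "U \<noteq> {}" using U(2) by auto
  have "(2::real) ^ (?m * r) = exp (real (?m * r) * ln 2)"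
    unfolding exp_of_nat_mult by simp
  then have pow2: "(2::real) ^ (?m * r) = exp (real r * ln 2 * real ?m)"
    by (simp add: algebra_simps)
  have "config_prob r n (\<lambda>M. real (cut_edges U M) \<le> \<alpha> * real r * real ?m)
      \<le> 2 ^ (?m * r) * (real ?m / real n) powr ((real (?m * r) - \<alpha> * real r * real ?m) / 2)"
    using assms by (intro config_prob_few_cut_edges_le) (use U \<open>even (r * n)\<close> \<open>U \<noteq> {}\<close> in auto)
  also have "\<dots> = exp (- (real r / 2) * (1 - \<alpha>) * real ?m * ln (real n / real ?m)
                      + real r * ln 2 * real ?m)"
    unfolding pow2 using U(2) \<open>?m \<le> n\<close>
    by (simp add: powr_def exp_add[symmetric] ln_div field_simps)
  finally show "config_prob r n (\<lambda>M. real (cut_edges U M) \<le> \<alpha> * real r * real ?m)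
      \<le> 1 * exp (- (real r / 2) * (1 - \<alpha>) * real ?m * ln (real n / real ?m)
                 + real r * ln 2 * real ?m)"
    by simp
qed

end
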